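(* Let $n$ be even with $v_2(n)$ odd. Then $D_{S(n)^*}=C_{S(n)^*}=2$.
   Context: For a natural number $n$, $\mathbb Z_n=\mathbb Z/n\mathbb Z$, $S(n)=\{x^2:x\in\mathbb Z_n\}$, $S(n)^*=S(n)\setminus\{0\}$. For $A\subseteq\mathbb Z_n$, a sequence $(y_1,\dots,y_t)$ ($t\ge1$) in $\mathbb Z_n$ is an $A$-weighted zero-sum sequence if there exist $a_1,\dots,a_t\in A$ with $\sum a_iy_i=0$; a sequence has an $A$-weighted zero-sum subsequence if some nonempty subsequence is an $A$-weighted zero-sum sequence. $D_A(n)$ is the least positive integer $t$ such that every sequence of length $t$ in $\mathbb Z_n$ has an $A$-weighted zero-sum subsequence; $C_A(n)$ is the least positive integer $t$ such that every sequence of length $t$ in $\mathbb Z_n$ has an $A$-weighted zero-sum subsequence consisting of consecutive terms. $D_{S(n)^*}=D_{S(n)^*}(n)$, $C_{S(n)^*}=C_{S(n)^*}(n)$. $v_2(n)$ is the exponent of $2$ in $n$. *)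

theory Defs
  imports "HOL-Computational_Algebra.Computational_Algebra"
begin

text \<open>Z_n is modelled by the residues {0..<n} of int, arithmetic taken mod n.
  Sequences of length t in Z_n are lists ys of length t with entries in {0..<n}.\<close>

definition Zn :: "nat \<Rightarrow> int set" where
  "Zn n = {0..<int n}"

definition Sq :: "nat \<Rightarrow> int set" where
  "Sq n = {(x^2) mod int n | x. x \<in> Zn n}"

definition Sq_star :: "nat \<Rightarrow> int set" where
  "Sq_star n = Sq n - {0}"

definition weighted_zero_sum_on :: "nat \<Rightarrow> int set \<Rightarrow> int list \<Rightarrow> nat set \<Rightarrow> bool" where
  "weighted_zero_sum_on n A ys I \<longleftrightarrow>
     I \<noteq> {} \<and> I \<subseteq> {..<length ys} \<and>
     (\<exists>a. (\<forall>i\<in>I. a i \<in> A) \<and> (\<Sum>i\<in>I. a i * ys ! i) mod int n = 0)"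

definition has_wzs_subseq :: "nat \<Rightarrow> int set \<Rightarrow> int list \<Rightarrow> bool" where
  "has_wzs_subseq n A ys \<longleftrightarrow> (\<exists>I. weighted_zero_sum_on n A ys I)"

definition has_wzs_consec :: "nat \<Rightarrow> int set \<Rightarrow> int list \<Rightarrow> bool" where
  "has_wzs_consec n A ys \<longleftrightarrow> (\<exists>i j. i < j \<and> weighted_zero_sum_on n A ys {i..<j})"

definition D_const :: "int set \<Rightarrow> nat \<Rightarrow> nat" where
  "D_const A n = (LEAST t. 0 < t \<and>
      (\<forall>ys. length ys = t \<and> set ys \<subseteq> Zn n \<longrightarrow> has_wzs_subseq n A ys))"

definition C_const :: "int set \<Rightarrow> nat \<Rightarrow> nat" where
  "C_const A n = (LEAST t. 0 < t \<and>
      (\<forall>ys. length ys = t \<and> set ys \<subseteq> Zn n \<longrightarrow> has_wzs_consec n A ys))"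

end

theory Submission
  imports Defs
begin

text \<open>Write n = 2^(2j+1) m with m odd. Then (2^j m)^2 = (n/2) m \<equiv> n/2 (mod n), so n/2 is
  a nonzero square weight. It annihilates every even residue, and of y1, y2, y1 + y2 one is
  even, so every sequence of length 2 has a weighted zero-sum block of consecutive terms.
  Conversely a nonzero square residue lies strictly between 0 and n, so the one-term
  sequence 1 has no weighted zero-sum subsequence.\<close>

lemma half_in_Sq_star:
  fixes n :: nat
  assumes "n > 0" and "even n" and "odd (multiplicity 2 n)"
  shows "int (n div 2) \<in> Sq_star n"
proof -
  obtain m where n_eq: "n = 2 ^ multiplicity 2 n * m" and "odd m"
    using multiplicity_decompose'[of n 2] assms(1) by auto
  obtain j where "multiplicity 2 n = Suc (2 * j)"
    using assms(3) by (metis oddE Suc_eq_plus1)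
  then have half: "n div 2 = 4 ^ j * m" and n_twice: "n = 2 * (4 ^ j * m)"
    using n_eq by (simp_all add: power_mult)
  obtain q where "m = 2 * q + 1" using \<open>odd m\<close> by (metis oddE)
  have "(2 ^ j * m) ^ 2 = 4 ^ j * m * m"
    by (simp add: power2_eq_square algebra_simps flip: power_mult_distrib)
  also have "\<dots> = n * q + n div 2"
    using half n_twice \<open>m = 2 * q + 1\<close> by (simp add: algebra_simps)
  finally have "(2 ^ j * m) ^ 2 mod n = n div 2"
    using assms(1) by simp
  then have "(int (2 ^ j * m mod n)) ^ 2 mod int n = int (n div 2)"
    by (metis of_nat_mod of_nat_power power_mod)
  moreover have "int (2 ^ j * m mod n) \<in> Zn n"
    unfolding Zn_def using assms(1) by auto
  ultimately have "int (n div 2) \<in> Sq n"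
    unfolding Sq_def by (metis (mono_tags, lifting) mem_Collect_eq)
  moreover have "int (n div 2) \<noteq> 0"
    using assms(1,2) by auto
  ultimately show ?thesis
    unfolding Sq_star_def by auto
qed

lemma Sq_star_bounds:
  assumes "n > 0" and "x \<in> Sq_star n"
  shows "0 < x \<and> x < int n"
proof -
  obtain y where "x = y ^ 2 mod int n" and "x \<noteq> 0"
    using assms(2) unfolding Sq_star_def Sq_def by blast
  moreover have "0 \<le> x \<and> x < int n"
    using \<open>x = y ^ 2 mod int n\<close> assms(1) by simp
  ultimately show ?thesis
    by linarith
qed

lemma half_times_even_mod:
  fixes n :: nat and y :: int
  assumes "even n" and "even y"
  shows "(int (n div 2) * y) mod int n = 0"
proof -
  obtain z where "y = 2 * z" using assms(2) by blast
  moreover have "int n = 2 * int (n div 2)" using assms(1) by auto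
  ultimately have "int (n div 2) * y = int n * z" by simp
  then show ?thesis by simp
qed

lemma has_wzs_consec_imp_has_wzs_subseq:
  "has_wzs_consec n A ys \<Longrightarrow> has_wzs_subseq n A ys"
  unfolding has_wzs_consec_def has_wzs_subseq_def by blast

lemma has_wzs_consec_if_block_killed:
  assumes "h \<in> A" and "i < j" and "j \<le> length ys"
    and "(h * (\<Sum>k\<in>{i..<j}. ys ! k)) mod int n = 0"
  shows "has_wzs_consec n A ys"
proof -
  have "weighted_zero_sum_on n A ys {i..<j}"
    unfolding weighted_zero_sum_on_def
    using assms by (intro conjI exI[of _ "\<lambda>_. h"]) (auto simp: sum_distrib_left)
  then show ?thesis
    unfolding has_wzs_consec_def using \<open>i < j\<close> by blast
qed

lemma has_wzs_consec_length_two: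
  assumes "h \<in> A" and kills_even: "\<And>y. even y \<Longrightarrow> (h * y) mod int n = 0"
    and "length ys = 2"
  shows "has_wzs_consec n A ys"
proof -
  obtain y0 y1 where ys: "ys = [y0, y1]"
    using assms(3) by (auto simp: numeral_2_eq_2 length_Suc_conv)
  have block_0: "(\<Sum>k\<in>{0..<1}. ys ! k) = y0"
   and block_1: "(\<Sum>k\<in>{1..<2}. ys ! k) = y1"
   and block_01: "(\<Sum>k\<in>{0..<2}. ys ! k) = y0 + y1"
    by (simp_all add: ys numeral_2_eq_2)
  consider "even y0" | "even y1" | "even (y0 + y1)"
    by auto
  then show ?thesis
  proof cases
    case 1
    then show ?thesis
      using has_wzs_consec_if_block_killed[OF \<open>h \<in> A\<close>, of 0 1] kills_even block_0 ys by simp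
  next
    case 2
    then show ?thesis
      using has_wzs_consec_if_block_killed[OF \<open>h \<in> A\<close>, of 1 2] kills_even block_1 ys by simp
  next
    case 3
    then show ?thesis
      using has_wzs_consec_if_block_killed[OF \<open>h \<in> A\<close>, of 0 2] kills_even block_01 ys by simp
  qed
qed

lemma not_has_wzs_subseq_one:
  assumes "n > 1"
  shows "\<not> has_wzs_subseq n (Sq_star n) [1]"
proof
  assume "has_wzs_subseq n (Sq_star n) [1]"
  then obtain I a where "I \<noteq> {}" and "I \<subseteq> {..<length [1::int]}"
    and weights: "\<forall>i\<in>I. a i \<in> Sq_star n"
    and zero_sum: "(\<Sum>i\<in>I. a i * [1::int] ! i) mod int n = 0"
    unfolding has_wzs_subseq_def weighted_zero_sum_on_def by meson
  then have "I = {0}" by auto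
  with weights zero_sum have "a 0 \<in> Sq_star n" and "a 0 mod int n = 0"
    by simp_all
  with Sq_star_bounds[of n "a 0"] assms show False
    by simp
qed

lemma Least_pos_eq_two:
  fixes P :: "nat \<Rightarrow> bool"
  assumes "P 2" and "\<not> P 1"
  shows "(LEAST t. 0 < t \<and> P t) = 2"
proof (rule Least_equality)
  fix t assume "0 < t \<and> P t"
  with assms(2) have "t \<noteq> 1" by auto
  with \<open>0 < t \<and> P t\<close> show "2 \<le> t" by linarith
qed (use assms(1) in simp)

theorem mainTheorem6:
  fixes n :: nat
  assumes "n > 0" and "even n" and "odd (multiplicity (2::nat) n)"
  shows "D_const (Sq_star n) n = 2 \<and> C_const (Sq_star n) n = 2"
proof -
  have "n > 1" using assms(1,2) by (cases "n = 1") auto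
  have length_two: "has_wzs_consec n (Sq_star n) ys" if "length ys = 2" for ys
    using has_wzs_consec_length_two[OF half_in_Sq_star[OF assms] _ that]
      half_times_even_mod[OF assms(2)] by blast
  have "set [1::int] \<subseteq> Zn n" and "length [1::int] = 1"
    unfolding Zn_def using \<open>n > 1\<close> by auto
  with not_has_wzs_subseq_one[OF \<open>n > 1\<close>] have one_fails:
    "\<not> (\<forall>ys. length ys = 1 \<and> set ys \<subseteq> Zn n \<longrightarrow> has_wzs_subseq n (Sq_star n) ys)"
    "\<not> (\<forall>ys. length ys = 1 \<and> set ys \<subseteq> Zn n \<longrightarrow> has_wzs_consec n (Sq_star n) ys)"
    using has_wzs_consec_imp_has_wzs_subseq by blast+
  show ?thesis
    unfolding D_const_def C_const_def
  proof (intro conjI Least_pos_eq_two)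
    show "\<forall>ys. length ys = 2 \<and> set ys \<subseteq> Zn n \<longrightarrow> has_wzs_consec n (Sq_star n) ys"
      using length_two by blast
    then show "\<forall>ys. length ys = 2 \<and> set ys \<subseteq> Zn n \<longrightarrow> has_wzs_subseq n (Sq_star n) ys"
      using has_wzs_consec_imp_has_wzs_subseq by blast
  qed (use one_fails in blast)+
qed

end
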